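(* Let $0<\eta<1/2$, $0\le\delta<1/2$, and let $p_0>p_1>p_2\ge\ldots\ge p_N$ be reals in $[\eta,1-\eta]$ with $p_0-p_1=p_1-p_2$; set $\Delta_i=p_0-p_i$ and define $\mathbf{p}^0,\ldots,\mathbf{p}^N\in[0,1]^N$ by $\mathbf{p}^0_i=p_i$, and for $j\ge1$, $\mathbf{p}^j_i=p_i$ ($i\ne j$), $\mathbf{p}^j_j=p_0$. Fix a density matrix $\rho$ on $\mathcal{H}_A\otimes\mathcal{H}_R$. Suppose we are given $m$ copies of the state $\mathcal{E}(\rho)$, where it is known that $\mathcal{E}=\mathcal{E}^{\mathbf{p}^k}$ for some unknown $k\in\{0,\ldots,N\}$, and that a measurement on these copies identifies the best arm of $\mathbf{p}^k$ (arm $1$ if $k=0$, arm $k$ if $k\ge1$) with probability at least $1-\delta$ for every $k$. Then $$m\geq\frac{\eta(1-\eta)(1-2\sqrt{\delta(1-\delta)})}{16}H(\mathbf{p}^0).$$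
   Context: $\mathcal{H}_A$ has orthonormal basis $\ket{1},\ldots,\ket{N}$, $\mathcal{H}_R$ is a qubit. For $x\in\{0,1\}^N$, $O_x$ is the unitary with $O_x\ket{i}\ket{c}=\ket{i}\ket{c+x_i\bmod2}$, and for $\mathbf{p}\in[0,1]^N$, $\mathcal{E}^{\mathbf{p}}(\rho)=\sum_{x}\prod_i\mathbf{p}_i^{x_i}(1-\mathbf{p}_i)^{1-x_i}O_x\rho O_x^\dagger$. For $\mathbf{q}$ with unique largest entry $q_{i^*}$, $H(\mathbf{q})=\sum_{i\ne i^*}(q_{i^*}-q_i)^{-2}$; thus $H(\mathbf{p}^0)=\sum_{i=2}^N(p_1-p_i)^{-2}$. *)

theory Defs
  imports Complex_Main "HOL-Library.FuncSet"
begin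

text \<open>Finite-dimensional operators are represented as kernels (matrices)
  indexed by an explicit finite index set S: A x y is the matrix entry.\<close>

type_synonym 'a op = "'a \<Rightarrow> 'a \<Rightarrow> complex"

definition mmult :: "'a set \<Rightarrow> 'a op \<Rightarrow> 'a op \<Rightarrow> 'a op" where
  "mmult S A B = (\<lambda>x y. \<Sum>z\<in>S. A x z * B z y)"

definition adj :: "'a op \<Rightarrow> 'a op" where
  "adj A = (\<lambda>x y. cnj (A y x))"

definition tr :: "'a set \<Rightarrow> 'a op \<Rightarrow> complex" where
  "tr S A = (\<Sum>x\<in>S. A x x)"

definition psd :: "'a set \<Rightarrow> 'a op \<Rightarrow> bool" where
  "psd S A \<longleftrightarrow> (\<forall>v::'a \<Rightarrow> complex.
      Im (\<Sum>x\<in>S. \<Sum>y\<in>S. cnj (v x) * A x y * v y) = 0 \<and>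
      Re (\<Sum>x\<in>S. \<Sum>y\<in>S. cnj (v x) * A x y * v y) \<ge> 0)"

definition density :: "'a set \<Rightarrow> 'a op \<Rightarrow> bool" where
  "density S \<rho> \<longleftrightarrow> psd S \<rho> \<and> tr S \<rho> = 1"

text \<open>Basis of H_A \<otimes> H_R: pairs (i,c), i \<in> {1..N}, c a bit (bool).\<close>
definition basisAR :: "nat \<Rightarrow> (nat \<times> bool) set" where
  "basisAR N = {1..N} \<times> UNIV"

text \<open>Oracle O_x |i,c> = |i, c xor x_i>, as a matrix.\<close>
definition Omat :: "(nat \<Rightarrow> bool) \<Rightarrow> (nat \<times> bool) op" where
  "Omat x = (\<lambda>(i,c) (i',c'). if i = i' \<and> c = (c' \<noteq> x i') then 1 else 0)"

definition bitstrings :: "nat \<Rightarrow> (nat \<Rightarrow> bool) set" where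
  "bitstrings N = PiE {1..N} (\<lambda>_. UNIV)"

definition chan :: "nat \<Rightarrow> (nat \<Rightarrow> real) \<Rightarrow> (nat \<times> bool) op \<Rightarrow> (nat \<times> bool) op" where
  "chan N q \<rho> = (\<lambda>a b. \<Sum>x\<in>bitstrings N.
      complex_of_real (\<Prod>i\<in>{1..N}. if x i then q i else 1 - q i) *
      mmult (basisAR N) (mmult (basisAR N) (Omat x) \<rho>) (adj (Omat x)) a b)"

text \<open>m-fold tensor power: index set = lists of length m of basis elements.\<close>
definition tensor_basis :: "'a set \<Rightarrow> nat \<Rightarrow> 'a list set" where
  "tensor_basis S m = {xs. length xs = m \<and> set xs \<subseteq> S}"

definition tpow :: "nat \<Rightarrow> 'a op \<Rightarrow> 'a list op" where
  "tpow m \<sigma> = (\<lambda>xs ys. \<Prod>k<m. \<sigma> (xs ! k) (ys ! k))"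

definition povm :: "'a set \<Rightarrow> 'o set \<Rightarrow> ('o \<Rightarrow> 'a op) \<Rightarrow> bool" where
  "povm S Out M \<longleftrightarrow> finite Out \<and> (\<forall>a\<in>Out. psd S (M a)) \<and>
     (\<forall>x\<in>S. \<forall>y\<in>S. (\<Sum>a\<in>Out. M a x y) = (if x = y then 1 else 0))"

definition best_arm :: "nat \<Rightarrow> (nat \<Rightarrow> real) \<Rightarrow> nat" where
  "best_arm N q = (THE i. i \<in> {1..N} \<and> (\<forall>j\<in>{1..N}. j \<noteq> i \<longrightarrow> q j < q i))"

definition hardness :: "nat \<Rightarrow> (nat \<Rightarrow> real) \<Rightarrow> real" where
  "hardness N q = (\<Sum>i\<in>{1..N} - {best_arm N q}. 1 / (q (best_arm N q) - q i)^2)"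

definition pvec :: "(nat \<Rightarrow> real) \<Rightarrow> nat \<Rightarrow> nat \<Rightarrow> real" where
  "pvec p j = (\<lambda>i. if j \<ge> 1 \<and> i = j then p 0 else p i)"

end

(*
  Fix a suboptimal arm j and compare the instances p^0 and p^j, which differ only in the bias
  of arm j. Writing rho as a Gram kernel and purifying the random flip of arm j, both channel
  outputs become Gram kernels sigma_0 = sum_k alpha_k alpha_k^* and sigma_j = sum_k beta_k beta_k^*
  over a common index set. For the cross kernel tau = sum_k alpha_k beta_k^*, Cauchy-Schwarz
  applied to the answer-1 element of the measurement and to its complement gives
  Re (tr tau)^m <= sqrt (a b) + sqrt ((1 - a) (1 - b)) <= 2 sqrt (delta (1 - delta)),
  where a >= 1 - delta and b <= delta are the probabilities of answer 1 under the two instances.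
  A direct computation gives tr tau = 1 - c D, where c <= (p_0 - p_j)^2 / (2 eta (1 - eta))
  and D <= 2 w_j, w_j being the weight of rho on arm j. Bernoulli's inequality turns this into
  m w_j (p_0 - p_j)^2 >= eta (1 - eta) (1 - 2 sqrt (delta (1 - delta))); summing over j with
  sum_j w_j <= 1 and p_0 - p_j <= 2 (p_1 - p_j) bounds m by the hardness.
*)

theory Submission
  imports Defs
begin

section \<open>Positive semidefinite kernels\<close>

definition sesq_form :: "'a set \<Rightarrow> 'a op \<Rightarrow> ('a \<Rightarrow> complex) \<Rightarrow> ('a \<Rightarrow> complex) \<Rightarrow> complex" where
  "sesq_form S A u w = (\<Sum>x\<in>S. \<Sum>y\<in>S. cnj (u x) * A x y * w y)"

lemma psd_iff_sesq_form:
  "psd S A \<longleftrightarrow> (\<forall>v. Im (sesq_form S A v v) = 0 \<and> Re (sesq_form S A v v) \<ge> 0)"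
  unfolding psd_def sesq_form_def by simp

lemma psdD:
  assumes "psd S A"
  shows "Im (sesq_form S A v v) = 0" "Re (sesq_form S A v v) \<ge> 0"
  using assms unfolding psd_iff_sesq_form by auto

lemma sesq_form_add_left: "sesq_form S A (\<lambda>x. u x + v x) w = sesq_form S A u w + sesq_form S A v w"
  unfolding sesq_form_def by (simp add: ring_distribs sum.distrib)

lemma sesq_form_add_right: "sesq_form S A w (\<lambda>x. u x + v x) = sesq_form S A w u + sesq_form S A w v"
  unfolding sesq_form_def by (simp add: ring_distribs sum.distrib)

lemma sesq_form_scale_left: "sesq_form S A (\<lambda>x. c * u x) w = cnj c * sesq_form S A u w"
  unfolding sesq_form_def by (simp add: sum_distrib_left mult_ac)

lemma sesq_form_scale_right: "sesq_form S A w (\<lambda>x. c * u x) = c * sesq_form S A w u"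
  unfolding sesq_form_def by (simp add: sum_distrib_left mult_ac)

lemma sesq_form_sum:
  "sesq_form S (\<lambda>x y. \<Sum>a\<in>I. M a x y) u w = (\<Sum>a\<in>I. sesq_form S (M a) u w)"
  unfolding sesq_form_def
  by (simp add: sum_distrib_left sum_distrib_right sum.swap[of _ I] mult.assoc)

lemma sesq_form_diff_kernel:
  "sesq_form S (\<lambda>x y. A x y - B x y) u w = sesq_form S A u w - sesq_form S B u w"
  unfolding sesq_form_def by (simp add: algebra_simps sum_subtractf)

lemma sesq_form_unit_left:
  assumes "finite S" "s \<in> S"
  shows "sesq_form S A (\<lambda>z. if z = s then 1 else 0) w = (\<Sum>y\<in>S. A s y * w y)"
proof -
  have "sesq_form S A (\<lambda>z. if z = s then 1 else 0) w =
      (\<Sum>x\<in>S. if x = s then (\<Sum>y\<in>S. A x y * w y) else 0)"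
    unfolding sesq_form_def by (intro sum.cong refl) auto
  then show ?thesis using assms by simp
qed

lemma sesq_form_unit_right:
  assumes "finite S" "s \<in> S"
  shows "sesq_form S A u (\<lambda>z. if z = s then 1 else 0) = (\<Sum>x\<in>S. cnj (u x) * A x s)"
  using assms unfolding sesq_form_def by (simp add: if_distrib[of "\<lambda>c. _ * c"] cong: if_cong)

lemma psd_subset:
  assumes "psd S A" "S' \<subseteq> S" "finite S"
  shows "psd S' A"
  unfolding psd_iff_sesq_form
proof
  fix v
  define v' where "v' = (\<lambda>x. if x \<in> S' then v x else (0::complex))"
  have "sesq_form S A v' v' = sesq_form S' A v v"
  proof -
    have "sesq_form S A v' v' =
        (\<Sum>x\<in>S. \<Sum>y\<in>S. if x \<in> S' \<and> y \<in> S' then cnj (v x) * A x y * v y else 0)"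
      unfolding sesq_form_def v'_def by (intro sum.cong refl) auto
    also have "\<dots> = (\<Sum>x\<in>S. if x \<in> S' then (\<Sum>y\<in>S'. cnj (v x) * A x y * v y) else 0)"
      using assms by (intro sum.cong refl)
        (auto simp: sum.inter_restrict[symmetric] Int_absorb1 if_distrib cong: if_cong)
    also have "\<dots> = sesq_form S' A v v"
      unfolding sesq_form_def using assms by (simp add: sum.inter_restrict[symmetric] Int_absorb1)
    finally show ?thesis .
  qed
  then show "Im (sesq_form S' A v v) = 0 \<and> 0 \<le> Re (sesq_form S' A v v)"
    using psdD[OF assms(1), of v'] by simp
qed

lemma psd_diag:
  assumes "psd S A" "finite S" "x \<in> S"
  shows "Im (A x x) = 0" "Re (A x x) \<ge> 0"
proof -
  have "psd {x} A" by (rule psd_subset[OF assms(1) _ assms(2)]) (use assms in auto)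
  from psdD[OF this, of "\<lambda>_. 1"] show "Im (A x x) = 0" "Re (A x x) \<ge> 0"
    by (simp_all add: sesq_form_def)
qed

lemma psd_hermitian:
  assumes "psd S A" "finite S" "x \<in> S" "y \<in> S"
  shows "A y x = cnj (A x y)"
proof (cases "x = y")
  case True
  then show ?thesis using psd_diag[OF assms(1,2,3)] by (simp add: complex_eq_iff)
next
  case False
  have "psd {x, y} A" "psd {x} A" "psd {y} A"
    by (rule psd_subset[OF assms(1) _ assms(2)]; use assms in auto)+
  from psdD(1)[OF this(1), of "\<lambda>_. 1"] psdD(1)[OF this(1), of "\<lambda>z. if z = y then \<i> else 1"]
    psdD(1)[OF this(2), of "\<lambda>_. 1"] psdD(1)[OF this(3), of "\<lambda>_. 1"]
  have "Im (A x y) + Im (A y x) = 0" "Re (A x y) - Re (A y x) = 0"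
    using False by (simp_all add: sesq_form_def)
  then show ?thesis by (simp add: complex_eq_iff)
qed

lemma sesq_form_hermitian:
  assumes "\<And>x y. x \<in> S \<Longrightarrow> y \<in> S \<Longrightarrow> A y x = cnj (A x y)"
  shows "sesq_form S A u w = cnj (sesq_form S A w u)"
proof -
  have "cnj (sesq_form S A w u) = (\<Sum>x\<in>S. \<Sum>y\<in>S. w x * cnj (A x y) * cnj (u y))"
    by (simp add: sesq_form_def)
  also have "\<dots> = (\<Sum>x\<in>S. \<Sum>y\<in>S. w x * A y x * cnj (u y))"
    by (intro sum.cong refl) (metis assms)
  also have "\<dots> = sesq_form S A u w"
    unfolding sesq_form_def by (subst sum.swap) (simp add: mult_ac)
  finally show ?thesis by simp
qed

lemma quadratic_nonneg_imp_le:
  fixes a b c :: real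
  assumes "\<And>t. 0 \<le> a + 2 * t * c + t\<^sup>2 * b" "a \<ge> 0" "b \<ge> 0"
  shows "c \<le> sqrt a * sqrt b"
proof (cases "b = 0")
  case True
  show ?thesis
  proof (rule ccontr)
    assume "\<not> ?thesis"
    then have "c > 0" using True by simp
    have "0 \<le> a + 2 * (-(a+1)/(2*c)) * c + (-(a+1)/(2*c))\<^sup>2 * b" by (rule assms(1))
    then show False using True \<open>c > 0\<close> by (simp add: field_simps)
  qed
next
  case False
  then have "b > 0" using assms by simp
  have "0 \<le> a + 2 * (-c/b) * c + (-c/b)\<^sup>2 * b" by (rule assms(1))
  then have "c\<^sup>2 \<le> a * b" using \<open>b > 0\<close> by (simp add: field_simps power2_eq_square)
  then have "sqrt (c\<^sup>2) \<le> sqrt (a * b)" by (rule real_sqrt_le_mono)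
  then show ?thesis by (simp add: real_sqrt_mult)
qed

lemma sum_sesq_form_cauchy_schwarz:
  assumes "psd S E" "finite S"
  shows "Re (\<Sum>l\<in>L. sesq_form S E (B l) (A l)) \<le>
     sqrt (Re (\<Sum>l\<in>L. sesq_form S E (A l) (A l))) * sqrt (Re (\<Sum>l\<in>L. sesq_form S E (B l) (B l)))"
proof (rule quadratic_nonneg_imp_le)
  show "0 \<le> Re (\<Sum>l\<in>L. sesq_form S E (A l) (A l))" "0 \<le> Re (\<Sum>l\<in>L. sesq_form S E (B l) (B l))"
    by (simp_all add: psdD[OF assms(1)] Re_sum sum_nonneg)
  have swap: "Re (sesq_form S E (A l) (B l)) = Re (sesq_form S E (B l) (A l))" for l
    using sesq_form_hermitian[OF psd_hermitian[OF assms], where u="A l" and w="B l"] by simp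
  fix t :: real
  have "0 \<le> Re (\<Sum>l\<in>L. sesq_form S E (\<lambda>x. A l x + of_real t * B l x) (\<lambda>x. A l x + of_real t * B l x))"
    by (simp add: psdD[OF assms(1)] Re_sum sum_nonneg)
  also have "\<dots> = Re (\<Sum>l\<in>L. sesq_form S E (A l) (A l)) + 2 * t * Re (\<Sum>l\<in>L. sesq_form S E (B l) (A l))
       + t\<^sup>2 * Re (\<Sum>l\<in>L. sesq_form S E (B l) (B l))"
    by (simp add: sesq_form_add_left sesq_form_add_right sesq_form_scale_left sesq_form_scale_right
        swap Re_sum sum.distrib sum_distrib_left algebra_simps power2_eq_square)
  finally show "0 \<le> Re (\<Sum>l\<in>L. sesq_form S E (A l) (A l)) + 2 * t * Re (\<Sum>l\<in>L. sesq_form S E (B l) (A l))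
       + t\<^sup>2 * Re (\<Sum>l\<in>L. sesq_form S E (B l) (B l))" .
qed

lemma sesq_form_cauchy_schwarz:
  assumes "psd S E" "finite S"
  shows "Re (sesq_form S E w v) \<le> sqrt (Re (sesq_form S E v v)) * sqrt (Re (sesq_form S E w w))"
  using sum_sesq_form_cauchy_schwarz[OF assms, where L="{()}" and A="\<lambda>_. v" and B="\<lambda>_. w"] by simp

lemma psd_zero_diag_row:
  assumes "psd S A" "finite S" "s \<in> S" "A s s = 0" "y \<in> S"
  shows "A s y = 0"
proof -
  define e where "e = (\<lambda>z. if z = s then 1 else (0::complex))"
  define w where "w = (\<lambda>z. cnj (A s z))"
  have "(\<Sum>z\<in>S. (cmod (A s z))\<^sup>2) = Re (sesq_form S A e w)"
    unfolding e_def w_def sesq_form_unit_left[OF assms(2,3)]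
    by (simp add: complex_mult_cnj Re_sum cmod_power2 del: of_real_power)
  also have "\<dots> \<le> sqrt (Re (sesq_form S A w w)) * sqrt (Re (sesq_form S A e e))"
    by (rule sesq_form_cauchy_schwarz[OF assms(1,2)])
  also have "sesq_form S A e e = 0"
    unfolding e_def sesq_form_unit_left[OF assms(2,3)] using assms(2-4) by (simp add: if_distrib cong: if_cong)
  finally have "(\<Sum>z\<in>S. (cmod (A s z))\<^sup>2) \<le> 0" by simp
  then have "(cmod (A s y))\<^sup>2 = 0"
    using sum_nonneg_eq_0_iff[OF assms(2), of "\<lambda>z. (cmod (A s z))\<^sup>2"] assms(5)
    by (simp add: order_antisym sum_nonneg)
  then show ?thesis by simp
qed

lemma psd_diff_rank_one:
  assumes A: "psd S A" and S: "finite S" "s \<in> S" and pos: "0 < Re (A s s)"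
  defines "u \<equiv> (\<lambda>x. A x s / of_real (sqrt (Re (A s s))))"
  shows "psd S (\<lambda>x y. A x y - u x * cnj (u y))"
  unfolding psd_iff_sesq_form
proof
  fix v
  define r where "r = sqrt (Re (A s s))"
  define g where "g = (\<Sum>y\<in>S. cnj (u y) * v y)"
  define e where "e = (\<lambda>z. if z = s then 1 else (0::complex))"
  have r: "r > 0" "A s s = of_real r * of_real r"
    using pos psd_diag(1)[OF A S] unfolding r_def by (auto simp: complex_eq_iff)
  have ev: "sesq_form S A e v = of_real r * g"
  proof -
    have "sesq_form S A e v = (\<Sum>y\<in>S. cnj (A y s) * v y)"
      unfolding e_def sesq_form_unit_left[OF S] using psd_hermitian[OF A S(1) _ S(2)]
      by (intro sum.cong refl) simp
    then show ?thesis using r by (simp add: g_def u_def r_def[symmetric] sum_distrib_left)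
  qed
  have ve: "sesq_form S A v e = of_real r * cnj g"
    unfolding e_def sesq_form_unit_right[OF S] using r
    by (simp add: g_def u_def r_def[symmetric] sum_distrib_left mult_ac)
  have ee: "sesq_form S A e e = of_real r * of_real r"
    unfolding e_def sesq_form_unit_left[OF S] using S r by (simp add: if_distrib cong: if_cong)
  have "cnj g * g = (\<Sum>x\<in>S. cnj (v x) * u x) * (\<Sum>y\<in>S. cnj (u y) * v y)"
    by (simp add: g_def mult.commute)
  then have rank_one: "sesq_form S (\<lambda>x y. u x * cnj (u y)) v v = cnj g * g"
    by (simp add: sesq_form_def sum_product mult_ac)
  \<comment> \<open>Schur complement: the form of A minus the rank-one part is the form of A itself at v - (g/r) e.\<close>
  define w where "w = (\<lambda>z. v z + (- (g / of_real r)) * e z)"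
  have "sesq_form S A w w = sesq_form S A v v - cnj g * g"
    unfolding w_def sesq_form_add_left sesq_form_add_right sesq_form_scale_left sesq_form_scale_right
      ev ve ee using r(1) by (simp add: field_simps)
  then have "sesq_form S (\<lambda>x y. A x y - u x * cnj (u y)) v v = sesq_form S A w w"
    by (simp add: sesq_form_diff_kernel rank_one)
  then show "Im (sesq_form S (\<lambda>x y. A x y - u x * cnj (u y)) v v) = 0 \<and>
      0 \<le> Re (sesq_form S (\<lambda>x y. A x y - u x * cnj (u y)) v v)"
    using psdD[OF A, of w] by simp
qed

lemma psd_split_rank_one:
  assumes "psd S A" "finite S" "s \<in> S"
  obtains u where "psd S (\<lambda>x y. A x y - u x * cnj (u y))" "A s s = u s * cnj (u s)"
proof (cases "Re (A s s) = 0")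
  case True
  then have "A s s = 0" using psd_diag(1)[OF assms] by (simp add: complex_eq_iff)
  then show ?thesis using that[of "\<lambda>_. 0"] assms(1) by simp
next
  case False
  then have pos: "0 < Re (A s s)" using psd_diag(2)[OF assms] by simp
  define u where "u = (\<lambda>x. A x s / of_real (sqrt (Re (A s s))))"
  have "u s * cnj (u s) = of_real (Re (A s s))"
    using pos psd_diag(1)[OF assms] by (simp add: u_def complex_eq_iff power2_eq_square)
  then have "A s s = u s * cnj (u s)"
    using psd_diag(1)[OF assms] by (simp add: complex_eq_iff)
  moreover have "psd S (\<lambda>x y. A x y - u x * cnj (u y))"
    unfolding u_def by (rule psd_diff_rank_one[OF assms pos])
  ultimately show ?thesis using that by blast
qed

definition gram :: "'k set \<Rightarrow> ('k \<Rightarrow> 'a \<Rightarrow> complex) \<Rightarrow> ('k \<Rightarrow> 'a \<Rightarrow> complex) \<Rightarrow> 'a op" where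
  "gram K \<alpha> \<beta> = (\<lambda>a b. \<Sum>k\<in>K. \<alpha> k a * cnj (\<beta> k b))"

lemma psd_gram_decomposition:
  assumes "finite S" "psd S A"
  shows "\<exists>V. \<forall>x\<in>S. \<forall>y\<in>S. A x y = gram S V V x y"
  using assms
proof (induction S arbitrary: A rule: finite_induct)
  case empty
  then show ?case by simp
next
  case (insert s F)
  obtain u where psd_B: "psd (insert s F) (\<lambda>x y. A x y - u x * cnj (u y))"
    and "A s s = u s * cnj (u s)"
    using psd_split_rank_one[OF insert.prems] insert.hyps by blast
  define B where "B = (\<lambda>x y. A x y - u x * cnj (u y))"
  have "B s s = 0" using \<open>A s s = u s * cnj (u s)\<close> by (simp add: B_def)
  then have B_row: "B s y = 0" and B_col: "B y s = 0" if "y \<in> insert s F" for y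
    using psd_zero_diag_row[OF psd_B[folded B_def] _ _ _ that]
      psd_hermitian[OF psd_B[folded B_def] _ _ that, of s] insert.hyps by auto
  have "psd F B" by (rule psd_subset[OF psd_B[folded B_def]]) (use insert.hyps in auto)
  then obtain V' where V': "\<forall>x\<in>F. \<forall>y\<in>F. B x y = gram F V' V' x y"
    using insert.IH by blast
  define V where "V = (\<lambda>r x. if r = s then u x else if x = s then 0 else V' r x)"
  have "A x y = gram (insert s F) V V x y" if xy: "x \<in> insert s F" "y \<in> insert s F" for x y
  proof -
    have "gram (insert s F) V V x y = u x * cnj (u y) + (\<Sum>r\<in>F. V r x * cnj (V r y))"
      using insert.hyps by (simp add: gram_def V_def)
    also have "(\<Sum>r\<in>F. V r x * cnj (V r y)) = B x y"
    proof (cases "x = s \<or> y = s")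
      case True
      have "(\<Sum>r\<in>F. V r x * cnj (V r y)) = 0"
        using insert.hyps True by (intro sum.neutral) (auto simp: V_def)
      then show ?thesis using True B_row B_col xy by auto
    next
      case False
      then have "x \<in> F" "y \<in> F" using xy by auto
      have "(\<Sum>r\<in>F. V r x * cnj (V r y)) = gram F V' V' x y"
        unfolding gram_def using insert.hyps False by (intro sum.cong refl) (auto simp: V_def)
      then show ?thesis using V' \<open>x \<in> F\<close> \<open>y \<in> F\<close> by simp
    qed
    finally show ?thesis by (simp add: B_def)
  qed
  then show ?case by blast
qed

section \<open>Tensor powers of Gram kernels\<close>

lemma finite_tensor_basis: "finite S \<Longrightarrow> finite (tensor_basis S m)"
  unfolding tensor_basis_def using finite_lists_length_eq[of S m] by (simp add: conj_commute)

lemma tensor_basis_Suc: "tensor_basis S (Suc m) = (\<lambda>(x, xs). x # xs) ` (S \<times> tensor_basis S m)"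
  unfolding tensor_basis_def by (auto simp: length_Suc_conv image_iff)

lemma tensor_basis_nth: "xs \<in> tensor_basis S m \<Longrightarrow> t < m \<Longrightarrow> xs ! t \<in> S"
  unfolding tensor_basis_def by auto

lemma prod_sum_tensor_basis:
  fixes h :: "nat \<Rightarrow> 'k \<Rightarrow> 'c::comm_semiring_1"
  assumes "finite K"
  shows "(\<Prod>t<m. \<Sum>k\<in>K. h t k) = (\<Sum>ks\<in>tensor_basis K m. \<Prod>t<m. h t (ks ! t))"
proof (induction m arbitrary: h)
  case 0
  have "tensor_basis K 0 = {[]}" by (auto simp: tensor_basis_def)
  then show ?case by simp
next
  case (Suc m)
  have "(\<Prod>t<Suc m. \<Sum>k\<in>K. h t k) = (\<Sum>k\<in>K. h 0 k) * (\<Prod>t<m. \<Sum>k\<in>K. h (Suc t) k)"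
    by (rule prod.lessThan_Suc_shift)
  also have "\<dots> = (\<Sum>(k, ks)\<in>K \<times> tensor_basis K m. h 0 k * (\<Prod>t<m. h (Suc t) (ks ! t)))"
    by (simp add: Suc.IH sum_product sum.cartesian_product)
  also have "\<dots> = (\<Sum>(k, ks)\<in>K \<times> tensor_basis K m. \<Prod>t<Suc m. h t ((k # ks) ! t))"
    by (intro sum.cong refl) (auto simp: prod.lessThan_Suc_shift simp del: prod.lessThan_Suc)
  also have "\<dots> = (\<Sum>ks\<in>tensor_basis K (Suc m). \<Prod>t<Suc m. h t (ks ! t))"
    unfolding tensor_basis_Suc by (subst sum.reindex) (auto simp: inj_on_def case_prod_beta)
  finally show ?case .
qed

lemma tr_tpow:
  assumes "finite S"
  shows "tr (tensor_basis S m) (tpow m \<sigma>) = tr S \<sigma> ^ m"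
  using prod_sum_tensor_basis[OF assms, of "\<lambda>_ a. \<sigma> a a" m] by (simp add: tr_def tpow_def)

definition tensor_vec :: "nat \<Rightarrow> ('k \<Rightarrow> 'a \<Rightarrow> complex) \<Rightarrow> 'k list \<Rightarrow> 'a list \<Rightarrow> complex" where
  "tensor_vec m \<alpha> ks xs = (\<Prod>t<m. \<alpha> (ks ! t) (xs ! t))"

lemma tpow_gram:
  assumes "finite K" "\<forall>a\<in>S. \<forall>b\<in>S. \<sigma> a b = gram K \<alpha> \<beta> a b"
    and "xs \<in> tensor_basis S m" "ys \<in> tensor_basis S m"
  shows "tpow m \<sigma> xs ys = gram (tensor_basis K m) (tensor_vec m \<alpha>) (tensor_vec m \<beta>) xs ys"
proof -
  have "tpow m \<sigma> xs ys = (\<Prod>t<m. \<Sum>k\<in>K. \<alpha> k (xs ! t) * cnj (\<beta> k (ys ! t)))"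
    unfolding tpow_def using assms(2-4) by (intro prod.cong refl) (simp add: tensor_basis_nth gram_def)
  also have "\<dots> = (\<Sum>ks\<in>tensor_basis K m. \<Prod>t<m. \<alpha> (ks ! t) (xs ! t) * cnj (\<beta> (ks ! t) (ys ! t)))"
    by (rule prod_sum_tensor_basis[OF assms(1)])
  finally show ?thesis by (simp add: gram_def tensor_vec_def prod.distrib cnj_prod)
qed

lemma tr_mmult_cong:
  assumes "\<forall>x\<in>T. \<forall>y\<in>T. X x y = Y x y"
  shows "tr T (mmult T E X) = tr T (mmult T E Y)"
  using assms by (simp add: tr_def mmult_def)

lemma tr_mmult_gram: "tr T (mmult T E (gram L A B)) = (\<Sum>l\<in>L. sesq_form T E (B l) (A l))"
proof -
  have "tr T (mmult T E (gram L A B)) = (\<Sum>x\<in>T. \<Sum>z\<in>T. \<Sum>l\<in>L. cnj (B l x) * E x z * A l z)"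
    by (simp add: tr_def mmult_def gram_def sum_distrib_left mult_ac)
  also have "\<dots> = (\<Sum>l\<in>L. \<Sum>x\<in>T. \<Sum>z\<in>T. cnj (B l x) * E x z * A l z)"
    by (simp add: sum.swap[of _ L])
  finally show ?thesis by (simp add: sesq_form_def)
qed

lemma tr_mmult_tpow_gram:
  assumes "finite K" "\<forall>a\<in>S. \<forall>b\<in>S. \<sigma> a b = gram K \<alpha> \<beta> a b"
  shows "tr (tensor_basis S m) (mmult (tensor_basis S m) E (tpow m \<sigma>)) =
    tr (tensor_basis S m) (mmult (tensor_basis S m) E
      (gram (tensor_basis K m) (tensor_vec m \<alpha>) (tensor_vec m \<beta>)))"
  by (rule tr_mmult_cong) (use tpow_gram[OF assms] in blast)

lemma tr_mmult_gram_nonneg: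
  assumes "psd T E"
  shows "0 \<le> Re (tr T (mmult T E (gram L A A)))"
  unfolding tr_mmult_gram by (simp add: psdD[OF assms] Re_sum sum_nonneg)

lemma tr_mmult_gram_cauchy_schwarz:
  assumes "psd T E" "finite T"
  shows "Re (tr T (mmult T E (gram L A B))) \<le>
    sqrt (Re (tr T (mmult T E (gram L A A)))) * sqrt (Re (tr T (mmult T E (gram L B B))))"
  unfolding tr_mmult_gram by (rule sum_sesq_form_cauchy_schwarz[OF assms])

section \<open>Distinguishing two tensor powers\<close>

lemma tr_mmult_tpow_gram_nonneg:
  assumes "psd (tensor_basis S m) E" "finite K" "\<forall>a\<in>S. \<forall>b\<in>S. \<sigma> a b = gram K \<alpha> \<alpha> a b"
  shows "0 \<le> Re (tr (tensor_basis S m) (mmult (tensor_basis S m) E (tpow m \<sigma>)))"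
  unfolding tr_mmult_tpow_gram[OF assms(2,3)] by (rule tr_mmult_gram_nonneg[OF assms(1)])

lemma tr_mmult_tpow_gram_cauchy_schwarz:
  fixes S :: "'a set" and m :: nat
  defines "T \<equiv> tensor_basis S m"
  assumes "psd T E" "finite S" "finite K"
    and "\<forall>a\<in>S. \<forall>b\<in>S. \<sigma>0 a b = gram K \<alpha> \<alpha> a b" "\<forall>a\<in>S. \<forall>b\<in>S. \<sigma>1 a b = gram K \<beta> \<beta> a b"
  shows "Re (tr T (mmult T E (tpow m (gram K \<alpha> \<beta>)))) \<le>
    sqrt (Re (tr T (mmult T E (tpow m \<sigma>0)))) * sqrt (Re (tr T (mmult T E (tpow m \<sigma>1))))"
proof -
  have cross: "\<forall>a\<in>S. \<forall>b\<in>S. gram K \<alpha> \<beta> a b = gram K \<alpha> \<beta> a b" by simp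
  show ?thesis
    unfolding T_def tr_mmult_tpow_gram[OF assms(4) cross] tr_mmult_tpow_gram[OF assms(4,5)]
      tr_mmult_tpow_gram[OF assms(4,6)]
    using assms(1-3) by (intro tr_mmult_gram_cauchy_schwarz) (simp_all add: finite_tensor_basis)
qed

lemma psd_sum:
  assumes "\<forall>a\<in>I. psd T (M a)"
  shows "psd T (\<lambda>x y. \<Sum>a\<in>I. M a x y)"
  unfolding psd_iff_sesq_form sesq_form_sum using assms
  by (auto simp: psdD Im_sum Re_sum intro!: sum_nonneg)

lemma tr_mmult_sum_left:
  "tr T (mmult T (\<lambda>x y. \<Sum>a\<in>I. M a x y) Z) = (\<Sum>a\<in>I. tr T (mmult T (M a) Z))"
  unfolding tr_def mmult_def by (simp add: sum_distrib_right sum.swap[of _ I])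

lemma povm_sum_tr:
  assumes "povm T Out M" "finite T"
  shows "(\<Sum>a\<in>Out. tr T (mmult T (M a) Z)) = tr T Z"
proof -
  have "(\<Sum>a\<in>Out. tr T (mmult T (M a) Z)) = tr T (mmult T (\<lambda>x y. \<Sum>a\<in>Out. M a x y) Z)"
    by (rule tr_mmult_sum_left[symmetric])
  also have "\<dots> = (\<Sum>x\<in>T. \<Sum>z\<in>T. if x = z then Z z x else 0)"
    using assms(1) unfolding tr_def mmult_def povm_def by (intro sum.cong refl) simp
  also have "\<dots> = tr T Z"
    using assms(2) by (simp add: tr_def)
  finally show ?thesis .
qed

lemma bernoulli_bhattacharyya_le:
  fixes a b \<delta> :: real
  assumes "0 \<le> \<delta>" "\<delta> < 1/2" "1 - \<delta> \<le> a" "a \<le> 1" "0 \<le> b" "b \<le> \<delta>"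
  shows "sqrt a * sqrt b + sqrt (1 - a) * sqrt (1 - b) \<le> 2 * sqrt (\<delta> * (1 - \<delta>))"
proof -
  define s1 where "s1 = sqrt a * sqrt b + sqrt (1 - a) * sqrt (1 - b)"
  define s2 where "s2 = sqrt a * sqrt (1 - b) - sqrt b * sqrt (1 - a)"
  \<comment> \<open>The two sums are the components of a unit vector, and s2 is at least 1 - 2 delta.\<close>
  have sq: "(sqrt a)\<^sup>2 = a" "(sqrt b)\<^sup>2 = b" "(sqrt (1 - a))\<^sup>2 = 1 - a" "(sqrt (1 - b))\<^sup>2 = 1 - b"
    using assms by auto
  have lagrange: "(x * y + z * w)\<^sup>2 + (x * w - y * z)\<^sup>2 = x\<^sup>2 * y\<^sup>2 + z\<^sup>2 * w\<^sup>2 + x\<^sup>2 * w\<^sup>2 + y\<^sup>2 * z\<^sup>2"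
    for x y z w :: real
    by (simp add: power2_eq_square algebra_simps)
  have "s1\<^sup>2 + s2\<^sup>2 = (sqrt a)\<^sup>2 * (sqrt b)\<^sup>2 + (sqrt (1 - a))\<^sup>2 * (sqrt (1 - b))\<^sup>2
      + (sqrt a)\<^sup>2 * (sqrt (1 - b))\<^sup>2 + (sqrt b)\<^sup>2 * (sqrt (1 - a))\<^sup>2"
    unfolding s1_def s2_def by (rule lagrange)
  then have unit: "s1\<^sup>2 + s2\<^sup>2 = 1" unfolding sq by (simp add: algebra_simps)
  have "sqrt a * sqrt (1 - b) \<ge> sqrt (1 - \<delta>) * sqrt (1 - \<delta>)"
    by (rule mult_mono) (use assms in auto)
  moreover have "sqrt b * sqrt (1 - a) \<le> sqrt \<delta> * sqrt \<delta>"
    by (rule mult_mono) (use assms in auto)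
  ultimately have "s2 \<ge> 1 - 2 * \<delta>" using assms(1,2) unfolding s2_def by simp
  then have "s2\<^sup>2 \<ge> (1 - 2 * \<delta>)\<^sup>2" using assms by (intro power_mono) auto
  moreover have dd: "0 \<le> \<delta> * (1 - \<delta>)" using assms by simp
  ultimately have "s1\<^sup>2 \<le> (2 * sqrt (\<delta> * (1 - \<delta>)))\<^sup>2"
    using unit by (simp add: power_mult_distrib power2_eq_square algebra_simps)
  then show ?thesis
    unfolding s1_def[symmetric] by (rule power2_le_imp_le) (use dd in simp)
qed

lemma povm_split_outcome:
  assumes "povm T Out M" "finite T" "b \<in> Out"
  shows "psd T (\<lambda>x y. \<Sum>a\<in>Out - {b}. M a x y)"
    and "tr T (mmult T (M b) Z) + tr T (mmult T (\<lambda>x y. \<Sum>a\<in>Out - {b}. M a x y) Z) = tr T Z"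
proof -
  show "psd T (\<lambda>x y. \<Sum>a\<in>Out - {b}. M a x y)"
    using assms(1) by (intro psd_sum) (auto simp: povm_def)
  have "finite Out" using assms(1) by (simp add: povm_def)
  then show "tr T (mmult T (M b) Z) + tr T (mmult T (\<lambda>x y. \<Sum>a\<in>Out - {b}. M a x y) Z) = tr T Z"
    using povm_sum_tr[OF assms(1,2), of Z] assms(3)
    by (simp add: tr_mmult_sum_left sum.remove)
qed

lemma tpow_gram_overlap_le:
  fixes S :: "'a set" and m :: nat and \<alpha> \<beta> :: "'k \<Rightarrow> 'a \<Rightarrow> complex"
  defines "T \<equiv> tensor_basis S m"
  assumes S: "finite S" and K: "finite K"
    and M: "povm T Out M" and outcomes: "o0 \<in> Out" "o1 \<in> Out" "o0 \<noteq> o1"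
    and \<sigma>0: "\<forall>a\<in>S. \<forall>b\<in>S. \<sigma>0 a b = gram K \<alpha> \<alpha> a b" and \<sigma>1: "\<forall>a\<in>S. \<forall>b\<in>S. \<sigma>1 a b = gram K \<beta> \<beta> a b"
    and trace: "tr S \<sigma>0 = 1" "tr S \<sigma>1 = 1"
    and \<delta>: "0 \<le> \<delta>" "\<delta> < 1/2"
    and success: "Re (tr T (mmult T (M o0) (tpow m \<sigma>0))) \<ge> 1 - \<delta>"
      "Re (tr T (mmult T (M o1) (tpow m \<sigma>1))) \<ge> 1 - \<delta>"
  shows "Re (tr S (gram K \<alpha> \<beta>) ^ m) \<le> 2 * sqrt (\<delta> * (1 - \<delta>))"
proof -
  define E where "E = (\<lambda>x y. \<Sum>a\<in>Out - {o0}. M a x y)"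
  define prob where "prob F \<sigma> = Re (tr T (mmult T F (tpow m \<sigma>)))" for F \<sigma>
  have T: "finite T" unfolding T_def by (rule finite_tensor_basis[OF S])
  have psd_M: "psd T (M a)" if "a \<in> Out" for a using M that by (simp add: povm_def)
  note psd_E = povm_split_outcome(1)[OF M T outcomes(1), folded E_def]
  have total: "prob (M o0) \<sigma> + prob E \<sigma> = Re (tr S \<sigma> ^ m)" for \<sigma>
    using arg_cong[OF povm_split_outcome(2)[OF M T outcomes(1), of "tpow m \<sigma>", folded E_def], of Re]
    by (simp add: prob_def T_def tr_tpow[OF S])
  have nonneg: "0 \<le> prob F \<sigma>0" "0 \<le> prob F \<sigma>1" if "psd T F" for F
    using that tr_mmult_tpow_gram_nonneg[OF _ K \<sigma>0] tr_mmult_tpow_gram_nonneg[OF _ K \<sigma>1]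
    unfolding prob_def T_def by auto
  have cs: "prob F (gram K \<alpha> \<beta>) \<le> sqrt (prob F \<sigma>0) * sqrt (prob F \<sigma>1)" if "psd T F" for F
    using that unfolding prob_def T_def by (rule tr_mmult_tpow_gram_cauchy_schwarz[OF _ S K \<sigma>0 \<sigma>1])
  have a: "1 - \<delta> \<le> prob (M o0) \<sigma>0" "prob (M o0) \<sigma>0 \<le> 1"
    using success(1) total[of \<sigma>0] nonneg(1)[OF psd_E] trace(1) by (simp_all add: prob_def)
  have "prob (M o1) \<sigma>1 \<le> prob E \<sigma>1"
  proof -
    have "prob E \<sigma>1 = (\<Sum>a\<in>Out - {o0}. prob (M a) \<sigma>1)"
      unfolding prob_def E_def tr_mmult_sum_left by simp
    moreover have "prob (M o1) \<sigma>1 \<le> (\<Sum>a\<in>Out - {o0}. prob (M a) \<sigma>1)"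
      using M outcomes nonneg(2)[OF psd_M] by (intro member_le_sum) (auto simp: povm_def)
    ultimately show ?thesis by simp
  qed
  then have b: "0 \<le> prob (M o0) \<sigma>1" "prob (M o0) \<sigma>1 \<le> \<delta>"
    using success(2) total[of \<sigma>1] trace(2) nonneg(2)[OF psd_M[OF outcomes(1)]]
    by (simp_all add: prob_def)
  have E_compl: "prob E \<sigma>0 = 1 - prob (M o0) \<sigma>0" "prob E \<sigma>1 = 1 - prob (M o0) \<sigma>1"
    using total[of \<sigma>0] total[of \<sigma>1] trace by simp_all
  have "Re (tr S (gram K \<alpha> \<beta>) ^ m) = prob (M o0) (gram K \<alpha> \<beta>) + prob E (gram K \<alpha> \<beta>)"
    by (simp add: total)
  also have "\<dots> \<le> sqrt (prob (M o0) \<sigma>0) * sqrt (prob (M o0) \<sigma>1)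
      + sqrt (1 - prob (M o0) \<sigma>0) * sqrt (1 - prob (M o0) \<sigma>1)"
    using cs[OF psd_M[OF outcomes(1)]] cs[OF psd_E] unfolding E_compl by (rule add_mono)
  also have "\<dots> \<le> 2 * sqrt (\<delta> * (1 - \<delta>))"
    by (rule bernoulli_bhattacharyya_le) (use \<delta> a b in auto)
  finally show ?thesis .
qed

section \<open>The oracle channel\<close>

definition oracle_flip :: "(nat \<Rightarrow> bool) \<Rightarrow> nat \<times> bool \<Rightarrow> nat \<times> bool" where
  "oracle_flip x a = (fst a, snd a \<noteq> x (fst a))"

abbreviation arm_flip :: "nat \<Rightarrow> nat \<times> bool \<Rightarrow> nat \<times> bool" where
  "arm_flip j \<equiv> oracle_flip (\<lambda>i. i = j)"

lemma finite_basisAR: "finite (basisAR N)"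
  by (simp add: basisAR_def)

lemma oracle_flip_in_basisAR: "a \<in> basisAR N \<Longrightarrow> oracle_flip x a \<in> basisAR N"
  by (auto simp: basisAR_def oracle_flip_def)

lemma oracle_flip_oracle_flip [simp]: "oracle_flip x (oracle_flip x a) = a"
  by (cases a) (auto simp: oracle_flip_def)

lemma oracle_flip_upd_True:
  assumes "\<not> x j"
  shows "oracle_flip (x(j := True)) a = oracle_flip x (arm_flip j a)"
  using assms by (auto simp: oracle_flip_def)

lemma Omat_eq: "Omat x a z = (if z = oracle_flip x a then 1 else 0)"
proof -
  obtain i c i' c' where "a = (i, c)" "z = (i', c')" by fastforce
  moreover have "(i = i' \<and> c = (c' \<noteq> x i')) = ((i', c') = (i, c \<noteq> x i))" by auto
  ultimately show ?thesis unfolding Omat_def oracle_flip_def by simp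
qed

lemma Omat_conjugate:
  assumes "a \<in> basisAR N" "b \<in> basisAR N"
  shows "mmult (basisAR N) (mmult (basisAR N) (Omat x) \<rho>) (adj (Omat x)) a b =
    \<rho> (oracle_flip x a) (oracle_flip x b)"
proof -
  have row: "mmult (basisAR N) (Omat x) \<rho> a w = \<rho> (oracle_flip x a) w" for w
    unfolding mmult_def Omat_eq using oracle_flip_in_basisAR[OF assms(1)] finite_basisAR
    by (simp add: if_distrib[of "\<lambda>c. c * _"] cong: if_cong)
  have "mmult (basisAR N) (mmult (basisAR N) (Omat x) \<rho>) (adj (Omat x)) a b =
      (\<Sum>z\<in>basisAR N. if z = oracle_flip x b then \<rho> (oracle_flip x a) z else 0)"
    unfolding mmult_def[of _ "mmult _ _ _"] adj_def Omat_eq row by (intro sum.cong refl) simp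
  then show ?thesis
    using oracle_flip_in_basisAR[OF assms(2)] finite_basisAR by simp
qed

definition bits_prob :: "nat set \<Rightarrow> (nat \<Rightarrow> real) \<Rightarrow> (nat \<Rightarrow> bool) \<Rightarrow> real" where
  "bits_prob I q x = (\<Prod>i\<in>I. if x i then q i else 1 - q i)"

lemma chan_eq:
  assumes "a \<in> basisAR N" "b \<in> basisAR N"
  shows "chan N q \<rho> a b =
    (\<Sum>x\<in>bitstrings N. of_real (bits_prob {1..N} q x) * \<rho> (oracle_flip x a) (oracle_flip x b))"
  unfolding chan_def bits_prob_def using Omat_conjugate[OF assms] by simp

lemma bits_prob_nonneg:
  assumes "\<forall>i\<in>I. 0 \<le> q i \<and> q i \<le> 1"
  shows "0 \<le> bits_prob I q x"
  unfolding bits_prob_def using assms by (intro prod_nonneg) auto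

lemma sum_bits_prob:
  assumes "finite I"
  shows "(\<Sum>x\<in>PiE I (\<lambda>_. UNIV). bits_prob I q x) = 1"
proof -
  have "(\<Sum>x\<in>PiE I (\<lambda>_. UNIV). bits_prob I q x) = (\<Prod>i\<in>I. \<Sum>b\<in>UNIV. if b then q i else 1 - q i)"
    unfolding bits_prob_def by (rule prod_sum_PiE[OF assms, symmetric]) auto
  then show ?thesis by (simp add: UNIV_bool)
qed

lemma bits_prob_remove:
  assumes "finite I" "j \<in> I"
  shows "bits_prob I q x = (if x j then q j else 1 - q j) * bits_prob (I - {j}) q x"
  unfolding bits_prob_def using assms by (rule prod.remove)

lemma bits_prob_upd_outside: "j \<notin> I \<Longrightarrow> bits_prob I q (x(j := b)) = bits_prob I q x"
  unfolding bits_prob_def by (intro prod.cong refl) auto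

lemma bits_prob_cong: "\<forall>i\<in>I. q' i = q i \<Longrightarrow> bits_prob I q' x = bits_prob I q x"
  unfolding bits_prob_def by (intro prod.cong refl) auto

definition bitstrings_off :: "nat \<Rightarrow> nat \<Rightarrow> (nat \<Rightarrow> bool) set" where
  "bitstrings_off N j = {x \<in> bitstrings N. \<not> x j}"

lemma finite_bitstrings: "finite (bitstrings N)"
  by (simp add: bitstrings_def finite_PiE)

lemma sum_bitstrings_split:
  assumes "j \<in> {1..N}"
  shows "(\<Sum>x\<in>bitstrings N. f x) = (\<Sum>x\<in>bitstrings_off N j. f x + f (x(j := True)))"
proof -
  let ?set = "\<lambda>x. x(j := True)"
  have "bitstrings N = bitstrings_off N j \<union> ?set ` bitstrings_off N j"
  proof (intro equalityI subsetI)
    fix x assume x: "x \<in> bitstrings N"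
    show "x \<in> bitstrings_off N j \<union> ?set ` bitstrings_off N j"
    proof (cases "x j")
      case True
      have "x(j := False) \<in> bitstrings_off N j"
        using x assms by (auto simp: bitstrings_off_def bitstrings_def PiE_def extensional_def)
      moreover have "x = ?set (x(j := False))"
        using True by (simp add: fun_eq_iff)
      ultimately show ?thesis by blast
    qed (use x in \<open>auto simp: bitstrings_off_def\<close>)
  qed (use assms in \<open>auto simp: bitstrings_off_def bitstrings_def PiE_def extensional_def\<close>)
  moreover have "inj_on ?set (bitstrings_off N j)"
    by (rule inj_onI) (auto simp: bitstrings_off_def fun_eq_iff split: if_splits)
  moreover have "bitstrings_off N j \<inter> ?set ` bitstrings_off N j = {}"
    by (auto simp: bitstrings_off_def)
  moreover have "finite (bitstrings_off N j)"
    using finite_bitstrings by (simp add: bitstrings_off_def)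
  ultimately show ?thesis
    by (simp add: sum.union_disjoint sum.reindex sum.distrib)
qed

lemma sum_bits_prob_off:
  assumes "j \<in> {1..N}"
  shows "(\<Sum>x\<in>bitstrings_off N j. bits_prob ({1..N} - {j}) q x) = 1"
proof -
  have "1 = (\<Sum>x\<in>bitstrings N. bits_prob {1..N} q x)"
    using sum_bits_prob[of "{1..N}" q] by (simp add: bitstrings_def)
  also have "\<dots> = (\<Sum>x\<in>bitstrings_off N j. bits_prob ({1..N} - {j}) q x)"
    unfolding sum_bitstrings_split[OF assms] using assms
    by (intro sum.cong refl)
      (auto simp: bits_prob_remove[of _ j] bits_prob_upd_outside bitstrings_off_def algebra_simps)
  finally show ?thesis by simp
qed

lemma chan_arm_split:
  assumes "j \<in> {1..N}" "a \<in> basisAR N" "b \<in> basisAR N"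
  shows "chan N q \<rho> a b = (\<Sum>x\<in>bitstrings_off N j. of_real (bits_prob ({1..N} - {j}) q x) *
    (of_real (1 - q j) * \<rho> (oracle_flip x a) (oracle_flip x b) +
     of_real (q j) * \<rho> (oracle_flip x (arm_flip j a)) (oracle_flip x (arm_flip j b))))"
  unfolding chan_eq[OF assms(2,3)] sum_bitstrings_split[OF assms(1)] using assms(1)
  by (intro sum.cong refl)
    (auto simp: bits_prob_remove[of _ j] bits_prob_upd_outside oracle_flip_upd_True
      bitstrings_off_def algebra_simps)

section \<open>Purifying the flip of a single arm\<close>

definition flip_mix :: "real \<Rightarrow> ('a \<Rightarrow> complex) \<Rightarrow> ('a \<Rightarrow> 'a) \<Rightarrow> bool \<Rightarrow> 'a \<Rightarrow> complex" where
  "flip_mix q u X l a = (if l then of_real (sqrt (q * (1 - q))) * (u a - u (X a))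
     else of_real (1 - q) * u a + of_real q * u (X a))"

lemma gram_flip_mix:
  assumes "0 \<le> q" "q \<le> 1"
  shows "gram UNIV (flip_mix q u X) (flip_mix q u X) a b =
    of_real (1 - q) * (u a * cnj (u b)) + of_real q * (u (X a) * cnj (u (X b)))"
proof -
  define s :: complex where "s = of_real (sqrt (q * (1 - q)))"
  have s: "s * s = of_real q * (1 - of_real q)"
    using assms by (simp add: s_def flip: of_real_mult) (simp add: algebra_simps)
  have [simp]: "cnj s = s" by (simp add: s_def)
  have "gram UNIV (flip_mix q u X) (flip_mix q u X) a b =
      ((1 - of_real q) * u a + of_real q * u (X a)) * ((1 - of_real q) * cnj (u b) + of_real q * cnj (u (X b)))
      + (s * s) * ((u a - u (X a)) * (cnj (u b) - cnj (u (X b))))"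
    unfolding gram_def flip_mix_def s_def[symmetric] by (simp add: UNIV_bool algebra_simps)
  then show ?thesis unfolding s by (simp add: algebra_simps)
qed

definition flip_gap :: "real \<Rightarrow> real \<Rightarrow> real" where
  "flip_gap qa qb = (sqrt (qa * (1 - qb)) - sqrt (qb * (1 - qa)))\<^sup>2"

lemma flip_gap_eq:
  assumes "0 \<le> qa" "qa \<le> 1" "0 \<le> qb" "qb \<le> 1"
  shows "flip_gap qa qb = qa + qb - 2 * qa * qb - 2 * (sqrt (qa * (1 - qa)) * sqrt (qb * (1 - qb)))"
proof -
  have "sqrt (qa * (1 - qa)) * sqrt (qb * (1 - qb)) = sqrt (qa * (1 - qb)) * sqrt (qb * (1 - qa))"
    by (simp add: real_sqrt_mult[symmetric] mult_ac)
  moreover have "0 \<le> qa * (1 - qb)" "0 \<le> qb * (1 - qa)" using assms by simp_all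
  ultimately show ?thesis
    unfolding flip_gap_def power2_diff real_sqrt_pow2[OF \<open>0 \<le> qa * (1 - qb)\<close>]
      real_sqrt_pow2[OF \<open>0 \<le> qb * (1 - qa)\<close>]
    by (simp add: algebra_simps)
qed

lemma flip_gap_same [simp]: "flip_gap q q = 0"
  by (simp add: flip_gap_def)

lemma flip_gap_le:
  assumes "0 \<le> \<eta>" "\<eta> \<le> qa" "qa \<le> 1 - \<eta>" "\<eta> \<le> qb" "qb \<le> 1 - \<eta>"
  shows "flip_gap qa qb * (2 * \<eta> * (1 - \<eta>)) \<le> (qa - qb)\<^sup>2"
proof -
  define X where "X = sqrt (qa * (1 - qb))"
  define Y where "Y = sqrt (qb * (1 - qa))"
  have X2: "X\<^sup>2 = qa * (1 - qb)" and Y2: "Y\<^sup>2 = qb * (1 - qa)" and "X \<ge> 0" "Y \<ge> 0"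
    using assms unfolding X_def Y_def by auto
  have "2 * \<eta> * (1 - \<eta>) \<le> X\<^sup>2 + Y\<^sup>2"
  proof -
    have "(qa - \<eta>) * ((1 - \<eta>) - qb) \<ge> 0" "(qb - \<eta>) * ((1 - \<eta>) - qa) \<ge> 0"
      using assms by simp_all
    then show ?thesis unfolding X2 Y2 by (simp add: algebra_simps)
  qed
  also have "\<dots> \<le> (X + Y)\<^sup>2" using \<open>X \<ge> 0\<close> \<open>Y \<ge> 0\<close> by (simp add: power2_sum)
  finally have "flip_gap qa qb * (2 * \<eta> * (1 - \<eta>)) \<le> (X - Y)\<^sup>2 * (X + Y)\<^sup>2"
    unfolding flip_gap_def X_def[symmetric] Y_def[symmetric] by (rule mult_left_mono) simp
  also have "\<dots> = (X\<^sup>2 - Y\<^sup>2)\<^sup>2" by (simp add: power2_eq_square algebra_simps)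
  also have "\<dots> = (qa - qb)\<^sup>2" unfolding X2 Y2 by (simp add: algebra_simps)
  finally show ?thesis .
qed

lemma sum_gram_flip_mix:
  assumes S: "finite S" "\<forall>a\<in>S. X a \<in> S" "\<forall>a\<in>S. X (X a) = a"
    and q: "0 \<le> qa" "qa \<le> 1" "0 \<le> qb" "qb \<le> 1"
  shows "(\<Sum>a\<in>S. gram UNIV (flip_mix qa u X) (flip_mix qb u X) a a) =
    (\<Sum>a\<in>S. u a * cnj (u a)) - of_real (flip_gap qa qb) * (\<Sum>a\<in>S. u a * cnj (u a - u (X a)))"
proof -
  define sa where "sa = sqrt (qa * (1 - qa))"
  define sb where "sb = sqrt (qb * (1 - qb))"
  define g where "g = flip_gap qa qb"
  have g: "g = qa + qb - 2 * qa * qb - 2 * (sa * sb)"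
    unfolding g_def sa_def sb_def by (rule flip_gap_eq[OF q])
  have swap_norm: "(\<Sum>a\<in>S. u (X a) * cnj (u (X a))) = (\<Sum>a\<in>S. u a * cnj (u a))"
    and swap_cross: "(\<Sum>a\<in>S. u (X a) * cnj (u a)) = (\<Sum>a\<in>S. u a * cnj (u (X a)))"
    by (rule sum.reindex_bij_witness[of S X X]; use S in auto)+
  have "(\<Sum>a\<in>S. gram UNIV (flip_mix qa u X) (flip_mix qb u X) a a) =
      (\<Sum>a\<in>S. of_real ((1 - qa) * (1 - qb) + sa * sb) * (u a * cnj (u a))
        + of_real ((1 - qa) * qb - sa * sb) * (u a * cnj (u (X a)))
        + of_real (qa * (1 - qb) - sa * sb) * (u (X a) * cnj (u a))
        + of_real (qa * qb + sa * sb) * (u (X a) * cnj (u (X a))))"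
    unfolding gram_def flip_mix_def sa_def[symmetric] sb_def[symmetric]
    by (intro sum.cong refl) (simp add: UNIV_bool algebra_simps)
  also have "\<dots> = of_real (1 - g) * (\<Sum>a\<in>S. u a * cnj (u a)) + of_real g * (\<Sum>a\<in>S. u a * cnj (u (X a)))"
    unfolding g
    by (simp only: sum.distrib sum_distrib_left[symmetric] swap_norm swap_cross) (simp add: algebra_simps)
  also have "\<dots> = (\<Sum>a\<in>S. u a * cnj (u a)) - of_real g * (\<Sum>a\<in>S. u a * cnj (u a - u (X a)))"
    by (simp add: sum_subtractf algebra_simps)
  finally show ?thesis unfolding g_def .
qed

lemma sum_arm_flip_diff:
  assumes "finite S" "(j, True) \<in> S" "(j, False) \<in> S"
  shows "(\<Sum>a\<in>S. u a * cnj (u a - u (arm_flip j a))) = of_real ((cmod (u (j, True) - u (j, False)))\<^sup>2)"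
proof -
  have "(\<Sum>a\<in>S. u a * cnj (u a - u (arm_flip j a))) =
      (\<Sum>a\<in>{(j, True), (j, False)}. u a * cnj (u a - u (arm_flip j a)))"
    using assms by (intro sum.mono_neutral_right) (auto simp: oracle_flip_def)
  also have "\<dots> = (u (j, True) - u (j, False)) * cnj (u (j, True) - u (j, False))"
    by (simp add: oracle_flip_def algebra_simps)
  also have "\<dots> = of_real ((cmod (u (j, True) - u (j, False)))\<^sup>2)"
    by (rule complex_norm_square[symmetric])
  finally show ?thesis .
qed

definition arm_index :: "nat \<Rightarrow> nat \<Rightarrow> ((nat \<Rightarrow> bool) \<times> (nat \<times> bool) \<times> bool) set" where
  "arm_index N j = bitstrings_off N j \<times> basisAR N \<times> UNIV"

\<comment> \<open>The index (x, r, l) consists of the oracle bits x off arm j, a Gram column r of rho and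
  the branch l of the flip of arm j.\<close>
definition arm_purification ::
  "(nat \<times> bool \<Rightarrow> nat \<times> bool \<Rightarrow> complex) \<Rightarrow> nat \<Rightarrow> ((nat \<Rightarrow> bool) \<Rightarrow> real) \<Rightarrow> real
    \<Rightarrow> (nat \<Rightarrow> bool) \<times> (nat \<times> bool) \<times> bool \<Rightarrow> nat \<times> bool \<Rightarrow> complex" where
  "arm_purification V j R q = (\<lambda>(x, r, l) a.
     of_real (sqrt (R x)) * flip_mix q (\<lambda>b. V r (oracle_flip x b)) (arm_flip j) l a)"

lemma finite_arm_index: "finite (arm_index N j)"
  using finite_bitstrings finite_basisAR by (simp add: arm_index_def bitstrings_off_def)

lemma gram_arm_purification:
  assumes "\<forall>x. 0 \<le> R x"
  shows "gram (arm_index N j) (arm_purification V j R qa) (arm_purification V j R qb) a b =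
    (\<Sum>x\<in>bitstrings_off N j. of_real (R x) * (\<Sum>r\<in>basisAR N.
       gram UNIV (flip_mix qa (\<lambda>c. V r (oracle_flip x c)) (arm_flip j))
                 (flip_mix qb (\<lambda>c. V r (oracle_flip x c)) (arm_flip j)) a b))"
proof -
  let ?\<alpha> = "arm_purification V j R qa" and ?\<beta> = "arm_purification V j R qb"
  have sqrt_R: "of_real (sqrt (R x)) * f * (of_real (sqrt (R x)) * g) = of_real (R x) * (f * g)"
    for x and f g :: complex
    using assms by (simp add: mult_ac flip: of_real_mult)
  have "gram (arm_index N j) ?\<alpha> ?\<beta> a b =
      (\<Sum>x\<in>bitstrings_off N j. \<Sum>r\<in>basisAR N. \<Sum>l\<in>UNIV. ?\<alpha> (x, r, l) a * cnj (?\<beta> (x, r, l) b))"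
    unfolding gram_def arm_index_def by (simp add: sum.cartesian_product)
  also have "\<dots> = (\<Sum>x\<in>bitstrings_off N j. of_real (R x) * (\<Sum>r\<in>basisAR N.
       gram UNIV (flip_mix qa (\<lambda>c. V r (oracle_flip x c)) (arm_flip j))
                 (flip_mix qb (\<lambda>c. V r (oracle_flip x c)) (arm_flip j)) a b))"
    unfolding arm_purification_def gram_def by (simp add: sqrt_R sum_distrib_left)
  finally show ?thesis .
qed

lemma chan_eq_gram_arm:
  assumes j: "j \<in> {1..N}" and q: "\<forall>i\<in>{1..N}. 0 \<le> q i \<and> q i \<le> 1"
    and V: "\<forall>a\<in>basisAR N. \<forall>b\<in>basisAR N. \<rho> a b = gram (basisAR N) V V a b"
    and ab: "a \<in> basisAR N" "b \<in> basisAR N"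
  defines "\<alpha> \<equiv> arm_purification V j (bits_prob ({1..N} - {j}) q) (q j)"
  shows "chan N q \<rho> a b = gram (arm_index N j) \<alpha> \<alpha> a b"
proof -
  have qj: "0 \<le> q j" "q j \<le> 1" using q j by auto
  have R: "\<forall>x. 0 \<le> bits_prob ({1..N} - {j}) q x" using q by (auto intro: bits_prob_nonneg)
  have "\<rho> (oracle_flip x a') (oracle_flip x b') =
      (\<Sum>r\<in>basisAR N. V r (oracle_flip x a') * cnj (V r (oracle_flip x b')))"
    if "a' \<in> basisAR N" "b' \<in> basisAR N" for x a' b'
    using V oracle_flip_in_basisAR that by (simp add: gram_def)
  then show ?thesis
    unfolding chan_arm_split[OF j ab] \<alpha>_def gram_arm_purification[OF R]
      gram_flip_mix[OF qj] using ab
    by (simp add: oracle_flip_in_basisAR sum.distrib sum_distrib_left)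
qed

lemma trace_oracle_flip_gram:
  assumes "\<forall>a\<in>basisAR N. \<forall>b\<in>basisAR N. \<rho> a b = gram (basisAR N) V V a b"
  shows "(\<Sum>r\<in>basisAR N. \<Sum>a\<in>basisAR N. V r (oracle_flip x a) * cnj (V r (oracle_flip x a))) =
    tr (basisAR N) \<rho>"
proof -
  have "(\<Sum>r\<in>basisAR N. \<Sum>a\<in>basisAR N. V r (oracle_flip x a) * cnj (V r (oracle_flip x a))) =
      (\<Sum>a\<in>basisAR N. \<rho> (oracle_flip x a) (oracle_flip x a))"
    using assms oracle_flip_in_basisAR by (subst sum.swap) (simp add: gram_def)
  also have "\<dots> = tr (basisAR N) \<rho>"
    unfolding tr_def
    by (rule sum.reindex_bij_witness[of _ "oracle_flip x" "oracle_flip x"]) (auto simp: oracle_flip_in_basisAR)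
  finally show ?thesis .
qed

lemma tr_gram_arm_purification:
  assumes j: "j \<in> {1..N}" and R: "\<forall>x. 0 \<le> R x" "(\<Sum>x\<in>bitstrings_off N j. R x) = 1"
    and V: "\<forall>a\<in>basisAR N. \<forall>b\<in>basisAR N. \<rho> a b = gram (basisAR N) V V a b"
    and trace: "tr (basisAR N) \<rho> = 1"
    and q: "0 \<le> qa" "qa \<le> 1" "0 \<le> qb" "qb \<le> 1"
  shows "tr (basisAR N) (gram (arm_index N j) (arm_purification V j R qa) (arm_purification V j R qb)) =
    of_real (1 - flip_gap qa qb * (\<Sum>r\<in>basisAR N. (cmod (V r (j, True) - V r (j, False)))\<^sup>2))"
proof -
  let ?S = "basisAR N"
  define D where "D = (\<Sum>r\<in>?S. (cmod (V r (j, True) - V r (j, False)))\<^sup>2)"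
  define u where "u x r = (\<lambda>c. V r (oracle_flip x c))" for x r
  define G where "G x r = gram UNIV (flip_mix qa (u x r) (arm_flip j)) (flip_mix qb (u x r) (arm_flip j))"
    for x r
  have jS: "(j, True) \<in> ?S" "(j, False) \<in> ?S" using j by (auto simp: basisAR_def)
  have flip: "\<forall>a\<in>?S. arm_flip j a \<in> ?S" "\<forall>a\<in>?S. arm_flip j (arm_flip j a) = a"
    by (simp_all add: oracle_flip_in_basisAR)
  have norm: "(\<Sum>r\<in>?S. \<Sum>a\<in>?S. u x r a * cnj (u x r a)) = 1" for x
    using trace_oracle_flip_gram[OF V, of x] trace by (simp add: u_def)
  have per_x: "(\<Sum>r\<in>?S. \<Sum>a\<in>?S. G x r a a) = of_real (1 - flip_gap qa qb * D)"
    if "x \<in> bitstrings_off N j" for x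
  proof -
    have "u x r (j, c) = V r (j, c)" for r c
      using that by (simp add: u_def oracle_flip_def bitstrings_off_def)
    then show ?thesis
      unfolding G_def sum_gram_flip_mix[OF finite_basisAR flip q] sum_arm_flip_diff[OF finite_basisAR jS]
      using norm[of x] by (simp add: D_def sum_subtractf sum_distrib_left[symmetric])
  qed
  have "tr ?S (gram (arm_index N j) (arm_purification V j R qa) (arm_purification V j R qb)) =
      (\<Sum>a\<in>?S. \<Sum>x\<in>bitstrings_off N j. of_real (R x) * (\<Sum>r\<in>?S. G x r a a))"
    unfolding tr_def gram_arm_purification[OF R(1)] G_def u_def ..
  also have "\<dots> = (\<Sum>x\<in>bitstrings_off N j. of_real (R x) * (\<Sum>r\<in>?S. \<Sum>a\<in>?S. G x r a a))"
    by (subst sum.swap) (simp only: sum_distrib_left[symmetric], subst sum.swap, rule refl)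
  also have "\<dots> = (\<Sum>x\<in>bitstrings_off N j. of_real (R x) * of_real (1 - flip_gap qa qb * D))"
    using per_x by simp
  also have "\<dots> = of_real (1 - flip_gap qa qb * D)"
    using R(2) by (simp add: sum_distrib_right[symmetric] flip: of_real_sum)
  finally show ?thesis unfolding D_def .
qed

section \<open>The sample bound\<close>

definition arm_weight :: "(nat \<times> bool) op \<Rightarrow> nat \<Rightarrow> real" where
  "arm_weight \<rho> j = Re (\<rho> (j, True) (j, True)) + Re (\<rho> (j, False) (j, False))"

lemma arm_weight_nonneg:
  assumes "density (basisAR N) \<rho>" "j \<in> {1..N}"
  shows "0 \<le> arm_weight \<rho> j"
  using assms psd_diag(2)[of "basisAR N" \<rho> "(j, True)"] psd_diag(2)[of "basisAR N" \<rho> "(j, False)"]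
  by (simp add: arm_weight_def density_def finite_basisAR basisAR_def)

lemma sum_arm_weight:
  assumes "density (basisAR N) \<rho>"
  shows "(\<Sum>j\<in>{1..N}. arm_weight \<rho> j) = 1"
proof -
  have "(\<Sum>j\<in>{1..N}. arm_weight \<rho> j) = Re (\<Sum>j\<in>{1..N}. \<Sum>c\<in>UNIV. \<rho> (j, c) (j, c))"
    by (simp add: arm_weight_def UNIV_bool add.commute)
  also have "\<dots> = Re (tr (basisAR N) \<rho>)"
    by (simp add: tr_def basisAR_def sum.cartesian_product)
  finally show ?thesis using assms by (simp add: density_def)
qed

lemma cmod_diff_square_le: "(cmod (z - w))\<^sup>2 \<le> 2 * (cmod z)\<^sup>2 + 2 * (cmod w)\<^sup>2"
proof -
  have "(cmod (z - w))\<^sup>2 \<le> (cmod z + cmod w)\<^sup>2"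
    by (intro power_mono norm_triangle_ineq4) simp
  also have "\<dots> \<le> 2 * (cmod z)\<^sup>2 + 2 * (cmod w)\<^sup>2"
    using sum_squares_bound[of "cmod z" "cmod w"] by (simp add: power2_sum)
  finally show ?thesis .
qed

lemma gram_arm_diff_le:
  assumes "finite S" "(j, True) \<in> S" "(j, False) \<in> S"
    and V: "\<forall>a\<in>S. \<forall>b\<in>S. \<rho> a b = gram S V V a b"
  shows "(\<Sum>r\<in>S. (cmod (V r (j, True) - V r (j, False)))\<^sup>2) \<le> 2 * arm_weight \<rho> j"
proof -
  have diag: "Re (\<rho> a a) = (\<Sum>r\<in>S. (cmod (V r a))\<^sup>2)" if "a \<in> S" for a
    using V that by (simp add: gram_def complex_mult_cnj cmod_power2 flip: of_real_power)
  have "(\<Sum>r\<in>S. (cmod (V r (j, True) - V r (j, False)))\<^sup>2)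
      \<le> (\<Sum>r\<in>S. 2 * (cmod (V r (j, True)))\<^sup>2 + 2 * (cmod (V r (j, False)))\<^sup>2)"
    by (intro sum_mono cmod_diff_square_le)
  also have "\<dots> = 2 * arm_weight \<rho> j"
    using assms(2,3) by (simp add: arm_weight_def diag sum.distrib sum_distrib_left)
  finally show ?thesis .
qed

lemma bhattacharyya_bound_lt_one:
  fixes \<delta> :: real
  assumes "0 \<le> \<delta>" "\<delta> < 1/2"
  shows "2 * sqrt (\<delta> * (1 - \<delta>)) < 1"
proof -
  have "\<delta> * (1 - \<delta>) = 1/4 - (1/2 - \<delta>)\<^sup>2" by (simp add: power2_eq_square algebra_simps)
  then have "\<delta> * (1 - \<delta>) < 1/4" using assms by simp
  then have "sqrt (\<delta> * (1 - \<delta>)) < sqrt (1/4)" by (rule real_sqrt_less_mono)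
  then show ?thesis by (simp add: real_sqrt_divide)
qed

lemma bernoulli_power_le_imp:
  fixes x F :: real
  assumes "(1 - x) ^ m \<le> F" "0 \<le> x" "F < 1" "0 \<le> F"
  shows "1 - F \<le> real m * x"
proof (cases "x \<le> 1")
  case True
  have "1 + real m * ((1 - x) - 1) \<le> (1 + ((1 - x) - 1)) ^ m"
    by (rule Bernoulli_inequality) (use True in simp)
  then show ?thesis using assms(1) by simp
next
  case False
  have "m \<noteq> 0" using assms(1,3) by (intro notI) simp
  then have "x \<le> real m * x" using assms(2) by (simp add: mult_le_cancel_right1)
  then show ?thesis using False assms(4) by linarith
qed

lemma chan_pair_common_gram:
  assumes j: "j \<in> {1..N}" and q: "\<forall>i\<in>{1..N}. 0 \<le> q i \<and> q i \<le> 1"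
    and q': "\<forall>i\<in>{1..N}. 0 \<le> q' i \<and> q' i \<le> 1" and agree: "\<forall>i\<in>{1..N} - {j}. q' i = q i"
    and \<rho>: "density (basisAR N) \<rho>"
  obtains \<alpha> \<beta> D where
    "\<forall>a\<in>basisAR N. \<forall>b\<in>basisAR N. chan N q \<rho> a b = gram (arm_index N j) \<alpha> \<alpha> a b"
    "\<forall>a\<in>basisAR N. \<forall>b\<in>basisAR N. chan N q' \<rho> a b = gram (arm_index N j) \<beta> \<beta> a b"
    "tr (basisAR N) (chan N q \<rho>) = 1" "tr (basisAR N) (chan N q' \<rho>) = 1"
    "tr (basisAR N) (gram (arm_index N j) \<alpha> \<beta>) = of_real (1 - flip_gap (q j) (q' j) * D)"
    "0 \<le> D" "D \<le> 2 * arm_weight \<rho> j"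
proof -
  let ?S = "basisAR N"
  define R where "R = bits_prob ({1..N} - {j}) q"
  have "psd ?S \<rho>" using \<rho> by (simp add: density_def)
  then obtain V where V: "\<forall>a\<in>?S. \<forall>b\<in>?S. \<rho> a b = gram ?S V V a b"
    using psd_gram_decomposition[OF finite_basisAR] by blast
  define \<alpha> where "\<alpha> = arm_purification V j R (q j)"
  define \<beta> where "\<beta> = arm_purification V j R (q' j)"
  define D where "D = (\<Sum>r\<in>?S. (cmod (V r (j, True) - V r (j, False)))\<^sup>2)"
  have R: "\<forall>x. 0 \<le> R x" "(\<Sum>x\<in>bitstrings_off N j. R x) = 1"
    using q sum_bits_prob_off[OF j] by (auto simp: R_def intro: bits_prob_nonneg)
  have \<sigma>0: "\<forall>a\<in>?S. \<forall>b\<in>?S. chan N q \<rho> a b = gram (arm_index N j) \<alpha> \<alpha> a b"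
    unfolding \<alpha>_def R_def using chan_eq_gram_arm[OF j q V] by blast
  have "bits_prob ({1..N} - {j}) q' = R" unfolding R_def using agree by (intro ext bits_prob_cong) blast
  then have \<sigma>1: "\<forall>a\<in>?S. \<forall>b\<in>?S. chan N q' \<rho> a b = gram (arm_index N j) \<beta> \<beta> a b"
    unfolding \<beta>_def using chan_eq_gram_arm[OF j q' V] by metis
  have tr_gram: "tr ?S (gram (arm_index N j) (arm_purification V j R qa) (arm_purification V j R qb))
      = of_real (1 - flip_gap qa qb * D)" if "0 \<le> qa" "qa \<le> 1" "0 \<le> qb" "qb \<le> 1" for qa qb
    unfolding D_def using \<rho> by (intro tr_gram_arm_purification[OF j R V _ that]) (simp add: density_def)
  show ?thesis
  proof (rule that[OF \<sigma>0 \<sigma>1])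
    show "tr ?S (chan N q \<rho>) = 1" "tr ?S (chan N q' \<rho>) = 1"
      using tr_gram q q' j \<sigma>0 \<sigma>1 by (simp_all add: tr_def \<alpha>_def \<beta>_def)
    show "tr ?S (gram (arm_index N j) \<alpha> \<beta>) = of_real (1 - flip_gap (q j) (q' j) * D)"
      unfolding \<alpha>_def \<beta>_def using q q' j by (intro tr_gram) auto
    show "0 \<le> D" by (simp add: D_def sum_nonneg)
    show "D \<le> 2 * arm_weight \<rho> j"
      unfolding D_def using j V by (intro gram_arm_diff_le) (auto simp: basisAR_def finite_basisAR)
  qed
qed

lemma arm_sample_bound:
  fixes q q' :: "nat \<Rightarrow> real" and N m :: nat
  defines "T \<equiv> tensor_basis (basisAR N) m"
  assumes j: "j \<in> {1..N}"
    and q: "\<forall>i\<in>{1..N}. 0 \<le> q i \<and> q i \<le> 1" and agree: "\<forall>i\<in>{1..N} - {j}. q' i = q i"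
    and \<eta>: "0 \<le> \<eta>" "\<eta> \<le> q j" "q j \<le> 1 - \<eta>" "\<eta> \<le> q' j" "q' j \<le> 1 - \<eta>"
    and \<rho>: "density (basisAR N) \<rho>"
    and M: "povm T Out M" "a \<in> Out" "b \<in> Out" "a \<noteq> b"
    and \<delta>: "0 \<le> \<delta>" "\<delta> < 1/2"
    and success: "1 - \<delta> \<le> Re (tr T (mmult T (M a) (tpow m (chan N q \<rho>))))"
      "1 - \<delta> \<le> Re (tr T (mmult T (M b) (tpow m (chan N q' \<rho>))))"
  shows "\<eta> * (1 - \<eta>) * (1 - 2 * sqrt (\<delta> * (1 - \<delta>))) \<le> real m * arm_weight \<rho> j * (q j - q' j)\<^sup>2"
proof -
  define F where "F = 2 * sqrt (\<delta> * (1 - \<delta>))"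
  define c where "c = flip_gap (q j) (q' j)"
  have q': "\<forall>i\<in>{1..N}. 0 \<le> q' i \<and> q' i \<le> 1"
  proof
    fix i assume "i \<in> {1..N}"
    then show "0 \<le> q' i \<and> q' i \<le> 1" using q agree \<eta> by (cases "i = j") auto
  qed
  obtain \<alpha> \<beta> D where \<sigma>: "\<forall>a\<in>basisAR N. \<forall>b\<in>basisAR N. chan N q \<rho> a b = gram (arm_index N j) \<alpha> \<alpha> a b"
      "\<forall>a\<in>basisAR N. \<forall>b\<in>basisAR N. chan N q' \<rho> a b = gram (arm_index N j) \<beta> \<beta> a b"
    and unit: "tr (basisAR N) (chan N q \<rho>) = 1" "tr (basisAR N) (chan N q' \<rho>) = 1"
    and overlap: "tr (basisAR N) (gram (arm_index N j) \<alpha> \<beta>) = of_real (1 - c * D)"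
    and D: "0 \<le> D" "D \<le> 2 * arm_weight \<rho> j"
    unfolding c_def by (rule chan_pair_common_gram[OF j q q' agree \<rho>])
  have "Re (tr (basisAR N) (gram (arm_index N j) \<alpha> \<beta>) ^ m) \<le> F"
    unfolding F_def T_def
    by (rule tpow_gram_overlap_le[OF finite_basisAR finite_arm_index M[unfolded T_def] \<sigma> unit \<delta>
          success[unfolded T_def]])
  then have "(1 - c * D) ^ m \<le> F"
    unfolding overlap by (simp flip: of_real_power)
  moreover have "0 \<le> c * D" using D by (simp add: c_def flip_gap_def)
  moreover have "F < 1" "0 \<le> F"
    unfolding F_def using bhattacharyya_bound_lt_one[OF \<delta>] \<delta> by simp_all
  ultimately have bernoulli: "1 - F \<le> real m * (c * D)" by (rule bernoulli_power_le_imp)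
  have c: "0 \<le> c" "c * (2 * \<eta> * (1 - \<eta>)) \<le> (q j - q' j)\<^sup>2"
    unfolding c_def using flip_gap_le[OF \<eta>] by (simp_all add: flip_gap_def)
  have "0 \<le> \<eta> * (1 - \<eta>)" using \<eta> by simp
  then have "(1 - F) * (\<eta> * (1 - \<eta>)) \<le> real m * (c * (2 * arm_weight \<rho> j)) * (\<eta> * (1 - \<eta>))"
    using bernoulli D c(1) by (intro mult_right_mono order.trans[OF bernoulli] mult_left_mono) auto
  also have "\<dots> = real m * arm_weight \<rho> j * (c * (2 * \<eta> * (1 - \<eta>)))"
    by (simp add: mult_ac)
  also have "\<dots> \<le> real m * arm_weight \<rho> j * (q j - q' j)\<^sup>2"
    using c(2) arm_weight_nonneg[OF \<rho> j] by (intro mult_left_mono) auto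
  finally show ?thesis by (simp add: F_def mult_ac)
qed

lemma best_arm_eqI:
  assumes "i \<in> {1..N}" "\<forall>j\<in>{1..N}. j \<noteq> i \<longrightarrow> q j < q i"
  shows "best_arm N q = i"
  unfolding best_arm_def
proof (rule the_equality)
  fix i' assume i': "i' \<in> {1..N} \<and> (\<forall>j\<in>{1..N}. j \<noteq> i' \<longrightarrow> q j < q i')"
  show "i' = i"
  proof (rule ccontr)
    assume "i' \<noteq> i"
    then have "q i < q i'" "q i' < q i" using i' assms by auto
    then show False by simp
  qed
qed (use assms in blast)

lemma decreasing_chain_le:
  fixes f :: "nat \<Rightarrow> 'a::order"
  assumes "\<forall>i. a \<le> i \<and> i < b \<longrightarrow> f (Suc i) \<le> f i" "a \<le> j" "j \<le> b"
  shows "f j \<le> f a"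
  using assms(2,3)
proof (induction j rule: dec_induct)
  case (step i)
  have "f (Suc i) \<le> f i" using assms(1) step.hyps step.prems by simp
  also have "f i \<le> f a" using step.IH step.prems by simp
  finally show ?case .
qed simp

lemma sum_inverse_square_le:
  fixes d W :: "nat \<Rightarrow> real"
  assumes "finite J" "sum W J \<le> 1" "0 \<le> m"
    and "\<And>j. j \<in> J \<Longrightarrow> 0 < d j \<and> 0 \<le> W j \<and> K \<le> m * W j * (d j)\<^sup>2"
  shows "K * (\<Sum>j\<in>J. 1 / (d j)\<^sup>2) \<le> m"
proof -
  have "K * (\<Sum>j\<in>J. 1 / (d j)\<^sup>2) = (\<Sum>j\<in>J. K / (d j)\<^sup>2)"
    by (simp add: sum_distrib_left)
  also have "\<dots> \<le> (\<Sum>j\<in>J. m * W j)"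
  proof (intro sum_mono)
    fix j assume "j \<in> J"
    then have "0 < d j" "K \<le> m * W j * (d j)\<^sup>2" using assms(4) by auto
    then show "K / (d j)\<^sup>2 \<le> m * W j" by (simp add: pos_divide_le_eq)
  qed
  also have "\<dots> \<le> m"
    using assms(2,3) by (simp add: sum_distrib_left[symmetric] mult_left_le)
  finally show ?thesis .
qed

lemma hardness_le_sum_inverse_gap:
  fixes p :: "nat \<Rightarrow> real"
  assumes "1 \<le> N" "p 1 < p 0"
    and gap: "\<And>j. j \<in> {2..N} \<Longrightarrow> p j < p 1 \<and> p 0 - p j \<le> 2 * (p 1 - p j)"
  shows "hardness N p \<le> 4 * (\<Sum>j\<in>{2..N}. 1 / (p 0 - p j)\<^sup>2)"
proof -
  have "best_arm N p = 1" using assms by (intro best_arm_eqI) auto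
  moreover have "{1..N} - {1} = {2..N}" by auto
  ultimately have "hardness N p = (\<Sum>j\<in>{2..N}. 1 / (p 1 - p j)\<^sup>2)"
    by (simp add: hardness_def)
  also have "\<dots> \<le> (\<Sum>j\<in>{2..N}. 4 * (1 / (p 0 - p j)\<^sup>2))"
  proof (rule sum_mono)
    fix j assume j: "j \<in> {2..N}"
    have recip: "1 / a \<le> 4 * (1 / b)" if "b \<le> 4 * a" "0 < a" "0 < b" for a b :: real
      using that by (simp add: field_simps)
    have "(p 0 - p j)\<^sup>2 \<le> (2 * (p 1 - p j))\<^sup>2" using gap[OF j] assms(2) by (intro power_mono) auto
    then have "(p 0 - p j)\<^sup>2 \<le> 4 * (p 1 - p j)\<^sup>2" by (simp only: power_mult_distrib) simp
    then show "1 / (p 1 - p j)\<^sup>2 \<le> 4 * (1 / (p 0 - p j)\<^sup>2)"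
      by (rule recip) (use gap[OF j] assms(2) in simp_all)
  qed
  finally show ?thesis by (simp add: sum_distrib_left)
qed

lemma arm_sample_bound_pvec:
  assumes j: "j \<in> {2..N}" and \<eta>: "0 < \<eta>" "\<forall>i\<in>{0..N}. \<eta> \<le> p i \<and> p i \<le> 1 - \<eta>"
    and \<delta>: "0 \<le> \<delta>" "\<delta> < 1/2"
    and \<rho>: "density (basisAR N) \<rho>" and M: "povm (tensor_basis (basisAR N) m) {1..N} M"
    and success: "1 - \<delta> \<le> Re (tr (tensor_basis (basisAR N) m) (mmult (tensor_basis (basisAR N) m)
        (M 1) (tpow m (chan N p \<rho>))))"
      "1 - \<delta> \<le> Re (tr (tensor_basis (basisAR N) m) (mmult (tensor_basis (basisAR N) m)
        (M j) (tpow m (chan N (pvec p j) \<rho>))))"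
  shows "\<eta> * (1 - \<eta>) * (1 - 2 * sqrt (\<delta> * (1 - \<delta>))) \<le> real m * arm_weight \<rho> j * (p 0 - p j)\<^sup>2"
proof -
  have "\<forall>i\<in>{1..N}. 0 \<le> p i \<and> p i \<le> 1" using \<eta> by force
  moreover have "\<forall>i\<in>{1..N} - {j}. pvec p j i = p i" "pvec p j j = p 0" using j by (simp_all add: pvec_def)
  moreover have "j \<in> {1..N}" "1 \<in> {1..N}" "1 \<noteq> j" "0 \<le> \<eta>" using j \<eta>(1) by auto
  moreover have "\<eta> \<le> p 0" "p 0 \<le> 1 - \<eta>" "\<eta> \<le> p j" "p j \<le> 1 - \<eta>" using j \<eta>(2) by auto
  ultimately have "\<eta> * (1 - \<eta>) * (1 - 2 * sqrt (\<delta> * (1 - \<delta>))) \<le>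
      real m * arm_weight \<rho> j * (p j - pvec p j j)\<^sup>2"
    using \<delta> \<rho> M success
    by (intro arm_sample_bound[where a = 1 and b = j and q = p and q' = "pvec p j" and Out = "{1..N}"])
      simp_all
  then show ?thesis using j by (simp add: pvec_def power2_commute)
qed

theorem corollary2:
  fixes N m :: nat and \<eta> \<delta> :: real and p :: "nat \<Rightarrow> real"
    and \<rho> :: "(nat \<times> bool) op" and M :: "nat \<Rightarrow> (nat \<times> bool) list op"
  assumes "N \<ge> 2"
    and "0 < \<eta>" "\<eta> < 1/2" "0 \<le> \<delta>" "\<delta> < 1/2"
    and "p 0 > p 1" "p 1 > p 2" "\<forall>i. 2 \<le> i \<and> i < N \<longrightarrow> p i \<ge> p (Suc i)"
    and "\<forall>i\<in>{0..N}. \<eta> \<le> p i \<and> p i \<le> 1 - \<eta>"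
    and "p 0 - p 1 = p 1 - p 2"
    and "density (basisAR N) \<rho>"
    and "povm (tensor_basis (basisAR N) m) {1..N} M"
    and "\<forall>k\<in>{0..N}.
           Re (tr (tensor_basis (basisAR N) m)
                 (mmult (tensor_basis (basisAR N) m)
                    (M (if k = 0 then 1 else k))
                    (tpow m (chan N (pvec p k) \<rho>)))) \<ge> 1 - \<delta>"
  shows "real m \<ge> \<eta> * (1 - \<eta>) * (1 - 2 * sqrt (\<delta> * (1 - \<delta>))) / 16 * hardness N (pvec p 0)"
proof -
  define K where "K = \<eta> * (1 - \<eta>) * (1 - 2 * sqrt (\<delta> * (1 - \<delta>)))"
  define S where "S = (\<Sum>j\<in>{2..N}. 1 / (p 0 - p j)\<^sup>2)"
  have p0: "pvec p 0 = p" by (simp add: pvec_def fun_eq_iff)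
  have gap: "p j < p 1" "p j < p 0" "p 0 - p j \<le> 2 * (p 1 - p j)" if "j \<in> {2..N}" for j
    using decreasing_chain_le[OF assms(8), of j] that assms(6,7,10) by auto
  have arm: "K \<le> real m * arm_weight \<rho> j * (p 0 - p j)\<^sup>2" if "j \<in> {2..N}" for j
    unfolding K_def using bspec[OF assms(13), of 0] bspec[OF assms(13), of j] that
    by (intro arm_sample_bound_pvec[OF that assms(2,9,4,5,11,12)]) (simp_all add: p0)
  have "K * S \<le> real m"
    unfolding S_def
  proof (rule sum_inverse_square_le)
    show "sum (arm_weight \<rho>) {2..N} \<le> 1"
      using sum_mono2[of "{1..N}" "{2..N}" "arm_weight \<rho>"] sum_arm_weight[OF assms(11)]
        arm_weight_nonneg[OF assms(11)] by simp
  qed (use arm gap assms(6) arm_weight_nonneg[OF assms(11)] in auto)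
  moreover have H: "hardness N (pvec p 0) \<le> 4 * S"
    unfolding S_def p0 using assms(1,6) gap by (intro hardness_le_sum_inverse_gap) auto
  moreover have "0 \<le> K" "0 \<le> S"
    using bhattacharyya_bound_lt_one[OF assms(4,5)] assms(2,3) by (simp_all add: K_def S_def sum_nonneg)
  moreover from this have "K / 16 * hardness N (pvec p 0) \<le> K / 16 * (4 * S)"
    by (intro mult_left_mono[OF H]) simp
  ultimately show ?thesis unfolding K_def[symmetric] by (simp add: mult_nonneg_nonneg)
qed

end
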